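(* Let $k_1,k_2$ be integers with $k_2\ge k_1\ge 1$. Then the submodule $\mathcal{J}^{12}$ of $\mathcal{F}$ generated by $\{R_{12}^{n_1,n_2,n_3}: n_1,n_2,n_3\in\mathbb{Z}\}$ is generated by $$J^{12}_{\min}=J^{12}_{(k_1,\infty),[0,\infty)}\cup J^{12}_{(\frac{k_1}{2},k_1],(\frac{k_2}{2},\infty)}\cup J^{12}_{[0,\frac{k_1}{2}],[\frac{k_2}{2},\infty)}.$$
   Context: $\mathcal{F}$ is the free $\mathbb{Z}[A^{\pm1}]$-module with basis the symbols $s_1^{l_1}s_2^{l_2}s_3^{l_3}$, $l_i\ge 0$, extended multilinearly to integer exponents by $s_i^{-1}=0$ and $s_i^{n}=-s_i^{-n-2}$ for $n\le -2$. For $n_i\in\mathbb{Z}$, $R_{12}(n_1,n_2,n_3)=-A^{-n_1-n_2-2}s_1^{n_1}s_2^{n_2}s_3^{n_3}-A^{-n_1-n_2+2}s_1^{n_1-2}s_2^{n_2-2}s_3^{n_3}-A^{-n_1-n_2}s_1^{n_1-1}s_2^{n_2-1}s_3^{n_3+1}-A^{-n_1-n_2}s_1^{n_1-1}s_2^{n_2-1}s_3^{n_3-1}$ and $R_{12}^{n_1,n_2,n_3}=R_{12}(n_1,n_2,n_3)-R_{12}(-n_1+k_1,-n_2+k_2,n_3)$. For subsets $I_1,I_2\subseteq\mathbb{R}$, $J^{12}_{I_1,I_2}=\{R^{n_1,n_2,n_3}_{12}: n_1\in I_1\cap\mathbb{Z},\ n_2\in I_2\cap\mathbb{Z},\ n_3\in\mathbb{Z}_{\ge0}\}$.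 *)

theory Defs
  imports Complex_Main "HOL-Library.Poly_Mapping"
begin

text \<open>The coefficient ring Z[A^{+-1}] is modelled as the group ring of (int,+) over int:
  a Laurent polynomial is a finitely supported map from exponents to integer coefficients.\<close>
type_synonym laurent = "int \<Rightarrow>\<^sub>0 int"

definition Apow :: "int \<Rightarrow> laurent" where
  "Apow k = Poly_Mapping.single k 1"

text \<open>The free Z[A^{+-1}]-module F with basis the monomials s1^l1 s2^l2 s3^l3, l_i >= 0.\<close>
type_synonym fmod = "(nat \<times> nat \<times> nat) \<Rightarrow>\<^sub>0 laurent"

definition smul :: "laurent \<Rightarrow> fmod \<Rightarrow> fmod" where
  "smul c x = Poly_Mapping.map (\<lambda>a. c * a) x"

inductive_set submod_gen :: "fmod set \<Rightarrow> fmod set" for S :: "fmod set" where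
  gen_zero: "0 \<in> submod_gen S"
| gen_base: "x \<in> S \<Longrightarrow> x \<in> submod_gen S"
| gen_add: "x \<in> submod_gen S \<Longrightarrow> y \<in> submod_gen S \<Longrightarrow> x + y \<in> submod_gen S"
| gen_smul: "x \<in> submod_gen S \<Longrightarrow> smul c x \<in> submod_gen S"

text \<open>Single-variable convention for integer exponents: s^n for n >= 0 is the basis power,
  s^(-1) = 0, s^n = - s^(-n-2) for n <= -2.  sexp n = (sign, nonnegative exponent).\<close>
definition sexp :: "int \<Rightarrow> int \<times> nat" where
  "sexp n = (if n \<ge> 0 then (1, nat n) else if n = -1 then (0, 0) else (-1, nat (-n-2)))"

definition mono :: "int \<Rightarrow> int \<Rightarrow> int \<Rightarrow> fmod" where
  "mono n1 n2 n3 =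
     Poly_Mapping.single (snd (sexp n1), snd (sexp n2), snd (sexp n3))
       (of_int (fst (sexp n1) * fst (sexp n2) * fst (sexp n3)))"

definition R12 :: "int \<Rightarrow> int \<Rightarrow> int \<Rightarrow> fmod" where
  "R12 n1 n2 n3 =
     - smul (Apow (-n1-n2-2)) (mono n1 n2 n3)
     - smul (Apow (-n1-n2+2)) (mono (n1-2) (n2-2) n3)
     - smul (Apow (-n1-n2)) (mono (n1-1) (n2-1) (n3+1))
     - smul (Apow (-n1-n2)) (mono (n1-1) (n2-1) (n3-1))"

definition R12sup :: "int \<Rightarrow> int \<Rightarrow> int \<Rightarrow> int \<Rightarrow> int \<Rightarrow> fmod" where
  "R12sup k1 k2 n1 n2 n3 = R12 n1 n2 n3 - R12 (-n1+k1) (-n2+k2) n3"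

definition J12 :: "int \<Rightarrow> int \<Rightarrow> real set \<Rightarrow> real set \<Rightarrow> fmod set" where
  "J12 k1 k2 I1 I2 = {R12sup k1 k2 n1 n2 n3 | n1 n2 n3.
      real_of_int n1 \<in> I1 \<and> real_of_int n2 \<in> I2 \<and> n3 \<ge> 0}"

end

theory Submission
  imports Defs
begin

(* R12sup k1 k2 a b c is antisymmetric under (a,b) -> (k1-a,k2-b) and under c -> -c-2, so it
   suffices to generate it for c >= 0 at one point of every reflected pair.  J_min contains such a
   point unless (a,b) or its reflection lies in the gap a > k1, b < 0; gap points are reached by
   induction on a.  Up to a unit, R12 is a difference operator along the diagonal applied to the
   monomials; smoothing along the antidiagonal by an operator of the same shape (R12sup_comb) gives
   expressions antisymmetric in b and, on the reflected part, in a.  The resulting four-term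
   relation between the points (a,b), (a,-b-2), (2k1+2-a,b), (2k1+2-a,-b-2) expresses the gap
   point (a,b) through points already reached. *)

lemma lookup_smul: "Poly_Mapping.lookup (smul c x) k = c * Poly_Mapping.lookup x k"
  unfolding smul_def by transfer (simp add: when_def)

lemma smul_add: "smul c (x + y) = smul c x + smul c y"
  by (rule poly_mapping_eqI) (simp add: lookup_smul lookup_add distrib_left)

lemma smul_minus: "smul c (- x) = - smul c x"
  by (rule poly_mapping_eqI) (simp add: lookup_smul)

lemma smul_diff: "smul c (x - y) = smul c x - smul c y"
  by (rule poly_mapping_eqI) (simp add: lookup_smul lookup_minus right_diff_distrib)

lemma smul_smul: "smul c (smul d x) = smul (c * d) x"
  by (rule poly_mapping_eqI) (simp add: lookup_smul mult.assoc)

lemma smul_minus_one: "smul (- 1) x = - x"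
  by (rule poly_mapping_eqI) (simp add: lookup_smul)

lemma Apow_add: "Apow (i + j) = Apow i * Apow j"
  unfolding Apow_def by (simp add: mult_single)

lemma smul_Apow_Apow: "smul (Apow i) (smul (Apow j) x) = smul (Apow (i + j)) x"
  by (simp add: smul_smul Apow_add)

lemma smul_Apow_0: "smul (Apow 0) x = x"
  by (rule poly_mapping_eqI) (simp add: lookup_smul Apow_def)

lemma add_self_eq_0_fmod: "(x :: fmod) + x = 0 \<longleftrightarrow> x = 0"
proof
  assume "x + x = 0"
  then have "Poly_Mapping.lookup (Poly_Mapping.lookup x k) j
      + Poly_Mapping.lookup (Poly_Mapping.lookup x k) j = 0" for k j
    by (metis lookup_add lookup_zero)
  then have "Poly_Mapping.lookup (Poly_Mapping.lookup x k) j = 0" for k j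
    by simp
  then show "x = 0"
    by (simp add: poly_mapping_eqI)
qed simp

lemma submod_gen_uminus: "x \<in> submod_gen S \<Longrightarrow> - x \<in> submod_gen S"
  by (metis smul_minus_one submod_gen.gen_smul)

lemma submod_gen_diff: "x \<in> submod_gen S \<Longrightarrow> y \<in> submod_gen S \<Longrightarrow> x - y \<in> submod_gen S"
  by (metis submod_gen_uminus diff_conv_add_uminus submod_gen.gen_add)

lemma submod_gen_minimal: "S \<subseteq> submod_gen T \<Longrightarrow> submod_gen S \<subseteq> submod_gen T"
proof
  fix x assume "S \<subseteq> submod_gen T" "x \<in> submod_gen S"
  then show "x \<in> submod_gen T"
    by (induction rule: submod_gen.induct[OF \<open>x \<in> submod_gen S\<close>])
      (auto intro: submod_gen.intros)
qed

lemma submod_gen_mono: "S \<subseteq> T \<Longrightarrow> submod_gen S \<subseteq> submod_gen T"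
  by (meson submod_gen.gen_base submod_gen_minimal subset_iff)

lemma sexp_reflect: "sexp (-n-2) = (- fst (sexp n), snd (sexp n))"
  unfolding sexp_def by auto

lemma mono_reflect_1: "mono (-a-2) b c = - mono a b c"
  unfolding mono_def by (simp add: sexp_reflect single_uminus)

lemma mono_reflect_2: "mono a (-b-2) c = - mono a b c"
  unfolding mono_def by (simp add: sexp_reflect single_uminus)

lemma mono_reflect_3: "mono a b (-c-2) = - mono a b c"
  unfolding mono_def by (simp add: sexp_reflect single_uminus)

definition shift_comb :: "int \<Rightarrow> int \<Rightarrow> (int \<Rightarrow> int \<Rightarrow> int \<Rightarrow> fmod) \<Rightarrow> int \<Rightarrow> int \<Rightarrow> int \<Rightarrow> fmod" where
  "shift_comb p q f a b c = f a b c
     + smul (Apow 2) (f (a + p) (b + q) (c + 1) + f (a + p) (b + q) (c - 1))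
     + smul (Apow 4) (f (a + 2 * p) (b + 2 * q) c)"

lemma shift_comb_commute: "shift_comb p q (shift_comb p' q' f) = shift_comb p' q' (shift_comb p q f)"
  unfolding shift_comb_def by (intro ext) (simp add: smul_add smul_Apow_Apow algebra_simps)

lemma shift_comb_reflect_1:
  assumes "\<And>a b c. f (-a-2) b c = - g a b c"
  shows "shift_comb p q f (-a-2) b c = - shift_comb (-p) q g a b c"
proof -
  have "f x b' c' = - g (-x-2) b' c'" for x b' c'
    using assms[of "-x-2" b' c'] by simp
  then show ?thesis
    unfolding shift_comb_def by (simp add: smul_add smul_minus smul_diff algebra_simps)
qed

lemma shift_comb_reflect_2:
  assumes "\<And>a b c. f a (-b-2) c = - g a b c"
  shows "shift_comb p q f a (-b-2) c = - shift_comb p (-q) g a b c"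
proof -
  have "f a' x c' = - g a' (-x-2) c'" for a' x c'
    using assms[of a' "-x-2" c'] by simp
  then show ?thesis
    unfolding shift_comb_def by (simp add: smul_add smul_minus smul_diff algebra_simps)
qed

lemma shift_comb_reflect_3:
  assumes "\<And>a b c. f a b (-c-2) = - f a b c"
  shows "shift_comb p q f a b (-c-2) = - shift_comb p q f a b c"
proof -
  have shifted: "-c-2 + 1 = -(c - 1) - 2" "-c-2 - 1 = -(c + 1) - 2"
    by simp_all
  show ?thesis
    unfolding shift_comb_def shifted assms by (simp add: smul_add smul_minus smul_diff algebra_simps)
qed

definition N12 :: "int \<Rightarrow> int \<Rightarrow> int \<Rightarrow> fmod" where
  "N12 = shift_comb (-1) (-1) mono"

lemma R12_eq_N12: "R12 n1 n2 n3 = - smul (Apow (-n1-n2-2)) (N12 n1 n2 n3)"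
  unfolding R12_def N12_def shift_comb_def by (simp add: smul_add smul_Apow_Apow algebra_simps)

lemma shift_comb_mono_antisym_1:
  "shift_comb p q (shift_comb (-p) q mono) (-a-2) b c = - shift_comb p q (shift_comb (-p) q mono) a b c"
proof -
  have "shift_comb (-p) q mono (-a-2) b c = - shift_comb p q mono a b c" for a b c
    using shift_comb_reflect_1[of mono mono "-p" q] mono_reflect_1 by simp
  then have "shift_comb p q (shift_comb (-p) q mono) (-a-2) b c
      = - shift_comb (-p) q (shift_comb p q mono) a b c"
    by (rule shift_comb_reflect_1)
  then show ?thesis
    by (simp add: shift_comb_commute)
qed

lemma shift_comb_mono_antisym_2:
  "shift_comb p q (shift_comb p (-q) mono) a (-b-2) c = - shift_comb p q (shift_comb p (-q) mono) a b c"
proof -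
  have "shift_comb p (-q) mono a (-b-2) c = - shift_comb p q mono a b c" for a b c
    using shift_comb_reflect_2[of mono mono p "-q"] mono_reflect_2 by simp
  then have "shift_comb p q (shift_comb p (-q) mono) a (-b-2) c
      = - shift_comb p (-q) (shift_comb p q mono) a b c"
    by (rule shift_comb_reflect_2)
  then show ?thesis
    by (simp add: shift_comb_commute)
qed

lemma R12sup_reflect: "R12sup k1 k2 (k1-a) (k2-b) c = - R12sup k1 k2 a b c"
  unfolding R12sup_def by simp

lemma R12sup_reflect_3: "R12sup k1 k2 a b (-c-2) = - R12sup k1 k2 a b c"
proof -
  have "N12 a b (-c-2) = - N12 a b c" for a b c
    unfolding N12_def by (rule shift_comb_reflect_3) (rule mono_reflect_3)
  then show ?thesis
    unfolding R12sup_def R12_eq_N12 by (simp add: smul_minus)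
qed

lemma R12sup_minus_one: "R12sup k1 k2 a b (-1) = 0"
proof -
  have "R12sup k1 k2 a b (-1) + R12sup k1 k2 a b (-1) = 0"
    using R12sup_reflect_3[of k1 k2 a b "-1"] by (simp add: eq_neg_iff_add_eq_0)
  then show ?thesis
    by (simp only: add_self_eq_0_fmod)
qed

definition R12sup_comb :: "int \<Rightarrow> int \<Rightarrow> int \<Rightarrow> int \<Rightarrow> int \<Rightarrow> fmod" where
  "R12sup_comb k1 k2 a b c = smul (Apow (a + b)) (shift_comb (-1) 1 (R12sup k1 k2) a b c)"

lemma R12sup_comb_eq:
  "R12sup_comb k1 k2 a b c = - smul (Apow (-2)) (shift_comb (-1) 1 N12 a b c)
     + smul (Apow (2*(a+b)-k1-k2-2)) (shift_comb 1 (-1) N12 (k1-a) (k2-b) c)"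
  unfolding R12sup_comb_def shift_comb_def R12sup_def R12_eq_N12
  by (simp add: smul_add smul_diff smul_minus smul_Apow_Apow algebra_simps)

lemma R12sup_comb_relation:
  "R12sup_comb k1 k2 a b c + R12sup_comb k1 k2 a (-b-2) c
   + smul (Apow (4*(a-k1-1))) (R12sup_comb k1 k2 (2*k1+2-a) b c + R12sup_comb k1 k2 (2*k1+2-a) (-b-2) c)
   = 0"
proof -
  let ?a' = "2*k1+2-a"
  have V_antisym: "shift_comb (-1) 1 N12 x (-y-2) c = - shift_comb (-1) 1 N12 x y c" for x y
    using shift_comb_mono_antisym_2[of "-1" 1] by (simp add: N12_def)
  have "k1 - ?a' = -(k1-a)-2"
    by simp
  then have V'_antisym: "shift_comb 1 (-1) N12 (k1-?a') y c = - shift_comb 1 (-1) N12 (k1-a) y c" for y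
    using shift_comb_mono_antisym_1[of 1 "-1" "k1-a"] by (simp only: N12_def)
  have exponents: "4*(a-k1-1) + (2*(?a'+y)-k1-k2-2) = 2*(a+y)-k1-k2-2" for y
    by simp
  show ?thesis
    unfolding R12sup_comb_eq smul_add smul_minus smul_Apow_Apow exponents V_antisym V'_antisym
    by (simp add: smul_minus algebra_simps)
qed

lemma R12sup_comb_in_span_of_partners:
  assumes "b \<noteq> -1 \<Longrightarrow> R12sup_comb k1 k2 a (-b-2) c \<in> submod_gen S"
    and "a \<noteq> k1+1 \<Longrightarrow> R12sup_comb k1 k2 (2*k1+2-a) b c \<in> submod_gen S"
    and "a \<noteq> k1+1 \<Longrightarrow> b \<noteq> -1 \<Longrightarrow> R12sup_comb k1 k2 (2*k1+2-a) (-b-2) c \<in> submod_gen S"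
  shows "R12sup_comb k1 k2 a b c \<in> submod_gen S"
proof -
  \<comment> \<open>For \<open>a = k1+1\<close> or \<open>b = -1\<close> terms of the relation coincide; \<open>F\<close> has no 2-torsion.\<close>
  let ?Z = "R12sup_comb k1 k2" and ?t = "Apow (4*(a-k1-1))"
  note relation = R12sup_comb_relation[of k1 k2 a b c]
  consider "a = k1+1" "b = -1" | "a = k1+1" "b \<noteq> -1" | "a \<noteq> k1+1" "b = -1" | "a \<noteq> k1+1" "b \<noteq> -1"
    by blast
  then show ?thesis
  proof cases
    case 1
    then have "(?Z a b c + ?Z a b c) + (?Z a b c + ?Z a b c) = 0"
      using relation by (simp add: smul_Apow_0)
    then have "?Z a b c = 0"
      by (simp only: add_self_eq_0_fmod)
    then show ?thesis
      by (simp add: submod_gen.gen_zero)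
  next
    case 2
    then have "(?Z a b c + ?Z a (-b-2) c) + (?Z a b c + ?Z a (-b-2) c) = 0"
      using relation by (simp add: smul_Apow_0)
    then have "?Z a b c = - ?Z a (-b-2) c"
      by (simp only: add_self_eq_0_fmod eq_neg_iff_add_eq_0)
    then show ?thesis
      using assms(1) 2 by (simp add: submod_gen_uminus)
  next
    case 3
    then have "(?Z a b c + smul ?t (?Z (2*k1+2-a) b c)) + (?Z a b c + smul ?t (?Z (2*k1+2-a) b c)) = 0"
      using relation by (simp add: smul_add algebra_simps)
    then have "?Z a b c = - smul ?t (?Z (2*k1+2-a) b c)"
      by (simp only: add_self_eq_0_fmod eq_neg_iff_add_eq_0)
    then show ?thesis
      using assms(2) 3 by (simp add: submod_gen_uminus submod_gen.gen_smul)
  next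
    case 4
    have "?Z a b c = - (?Z a (-b-2) c + smul ?t (?Z (2*k1+2-a) b c + ?Z (2*k1+2-a) (-b-2) c))"
      using relation by (simp only: add.assoc eq_neg_iff_add_eq_0)
    also have "\<dots> \<in> submod_gen S"
      using assms(1)[OF 4(2)] assms(2)[OF 4(1)] assms(3)[OF 4]
      by (intro submod_gen_uminus submod_gen.gen_add submod_gen.gen_smul)
    finally show ?thesis .
  qed
qed

lemma R12sup_comb_in_span:
  assumes "\<And>c. R12sup k1 k2 a b c \<in> submod_gen S"
    and "\<And>c. R12sup k1 k2 (a-1) (b+1) c \<in> submod_gen S"
    and "\<And>c. R12sup k1 k2 (a-2) (b+2) c \<in> submod_gen S"
  shows "R12sup_comb k1 k2 a b c \<in> submod_gen S"
  unfolding R12sup_comb_def shift_comb_def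
  using assms by (intro submod_gen.gen_smul submod_gen.gen_add) auto

lemma R12sup_in_span_of_comb:
  assumes "R12sup_comb k1 k2 a b c \<in> submod_gen S"
    and "\<And>c. R12sup k1 k2 (a-1) (b+1) c \<in> submod_gen S"
    and "\<And>c. R12sup k1 k2 (a-2) (b+2) c \<in> submod_gen S"
  shows "R12sup k1 k2 a b c \<in> submod_gen S"
proof -
  have "R12sup k1 k2 a b c = smul (Apow (-(a+b))) (R12sup_comb k1 k2 a b c)
     - smul (Apow 2) (R12sup k1 k2 (a-1) (b+1) (c+1) + R12sup k1 k2 (a-1) (b+1) (c-1))
     - smul (Apow 4) (R12sup k1 k2 (a-2) (b+2) c)"
    unfolding R12sup_comb_def smul_Apow_Apow shift_comb_def by (simp add: smul_Apow_0)
  also have "\<dots> \<in> submod_gen S"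
    using assms by (intro submod_gen_diff submod_gen.gen_smul submod_gen.gen_add)
  finally show ?thesis .
qed

definition Jmin :: "int \<Rightarrow> int \<Rightarrow> fmod set" where
  "Jmin k1 k2 = J12 k1 k2 {real_of_int k1<..} {0..}
     \<union> J12 k1 k2 {real_of_int k1 / 2<..real_of_int k1} {real_of_int k2 / 2<..}
     \<union> J12 k1 k2 {0..real_of_int k1 / 2} {real_of_int k2 / 2..}"

definition Jmin_index :: "int \<Rightarrow> int \<Rightarrow> int \<Rightarrow> int \<Rightarrow> bool" where
  "Jmin_index k1 k2 a b \<longleftrightarrow>
     k1 < a \<and> 0 \<le> b \<or> k1 < 2*a \<and> a \<le> k1 \<and> k2 < 2*b \<or> 0 \<le> a \<and> 2*a \<le> k1 \<and> k2 \<le> 2*b"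

lemma R12sup_in_J12:
  "real_of_int a \<in> I1 \<Longrightarrow> real_of_int b \<in> I2 \<Longrightarrow> 0 \<le> c \<Longrightarrow> R12sup k1 k2 a b c \<in> J12 k1 k2 I1 I2"
  unfolding J12_def by blast

lemma R12sup_in_Jmin:
  assumes "Jmin_index k1 k2 a b" and "0 \<le> c"
  shows "R12sup k1 k2 a b c \<in> Jmin k1 k2"
proof -
  from assms(1) consider "k1 < a" "0 \<le> b" | "k1 < 2*a" "a \<le> k1" "k2 < 2*b" | "0 \<le> a" "2*a \<le> k1" "k2 \<le> 2*b"
    unfolding Jmin_index_def by blast
  then show ?thesis
  proof cases
    case 1
    then have "R12sup k1 k2 a b c \<in> J12 k1 k2 {real_of_int k1<..} {0..}"
      using assms(2) by (intro R12sup_in_J12) simp_all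
    then show ?thesis
      unfolding Jmin_def by blast
  next
    case 2
    then have "R12sup k1 k2 a b c \<in> J12 k1 k2 {real_of_int k1 / 2<..real_of_int k1} {real_of_int k2 / 2<..}"
      using assms(2) by (intro R12sup_in_J12) simp_all
    then show ?thesis
      unfolding Jmin_def by blast
  next
    case 3
    then have "R12sup k1 k2 a b c \<in> J12 k1 k2 {0..real_of_int k1 / 2} {real_of_int k2 / 2..}"
      using assms(2) by (intro R12sup_in_J12) simp_all
    then show ?thesis
      unfolding Jmin_def by blast
  qed
qed

definition spanned :: "int \<Rightarrow> int \<Rightarrow> int \<Rightarrow> int \<Rightarrow> bool" where
  "spanned k1 k2 a b \<longleftrightarrow> (\<forall>c. R12sup k1 k2 a b c \<in> submod_gen (Jmin k1 k2))"

lemma spanned_reflect: "spanned k1 k2 (k1-a) (k2-b) \<Longrightarrow> spanned k1 k2 a b"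
  unfolding spanned_def R12sup_reflect by (metis submod_gen_uminus minus_minus)

lemma spanned_if_nonneg:
  assumes "\<And>c. 0 \<le> c \<Longrightarrow> R12sup k1 k2 a b c \<in> submod_gen (Jmin k1 k2)"
  shows "spanned k1 k2 a b"
  unfolding spanned_def
proof
  fix c :: int
  consider "0 \<le> c" | "c = -1" | "0 \<le> -c-2"
    by linarith
  then show "R12sup k1 k2 a b c \<in> submod_gen (Jmin k1 k2)"
  proof cases
    case 1
    then show ?thesis by (rule assms)
  next
    case 2
    then show ?thesis by (simp add: R12sup_minus_one submod_gen.gen_zero)
  next
    case 3
    then have "- R12sup k1 k2 a b (-c-2) \<in> submod_gen (Jmin k1 k2)"
      by (intro submod_gen_uminus assms)
    then show ?thesis by (simp add: R12sup_reflect_3)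
  qed
qed

lemma spanned_off_gap:
  assumes "\<not> (k1 < a \<and> b < 0)" and "\<not> (a < 0 \<and> k2 < b)"
  shows "spanned k1 k2 a b"
proof -
  have "Jmin_index k1 k2 a b \<or> Jmin_index k1 k2 (k1-a) (k2-b)"
    using assms unfolding Jmin_index_def by arith
  moreover have "spanned k1 k2 x y" if "Jmin_index k1 k2 x y" for x y
    using that by (intro spanned_if_nonneg submod_gen.gen_base R12sup_in_Jmin)
  ultimately show ?thesis
    using spanned_reflect by blast
qed

lemma spanned_gap:
  assumes "1 \<le> k1"
  shows "k1 < a \<Longrightarrow> b < 0 \<Longrightarrow> spanned k1 k2 a b"
proof (induction "nat a" arbitrary: a b rule: less_induct)
  case less
  have spanned_below: "spanned k1 k2 p q"
    if "k1 < p \<and> q < 0 \<longrightarrow> p < a" and "p < 0 \<and> k2 < q \<longrightarrow> k1 - p < a" for p q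
  proof -
    consider "k1 < p \<and> q < 0" | "p < 0 \<and> k2 < q" | "\<not> (k1 < p \<and> q < 0)" "\<not> (p < 0 \<and> k2 < q)"
      by blast
    then show ?thesis
    proof cases
      case 1
      then show ?thesis using less.hyps[of p q] that less.prems assms by simp
    next
      case 2
      then have "spanned k1 k2 (k1-p) (k2-q)"
        using less.hyps[of "k1-p" "k2-q"] that less.prems assms by simp
      then show ?thesis by (rule spanned_reflect)
    next
      case 3
      then show ?thesis by (rule spanned_off_gap)
    qed
  qed
  then have below: "R12sup k1 k2 p q c \<in> submod_gen (Jmin k1 k2)"
    if "k1 < p \<and> q < 0 \<longrightarrow> p < a" and "p < 0 \<and> k2 < q \<longrightarrow> k1 - p < a" for p q c
    using that unfolding spanned_def by blast
  have "R12sup_comb k1 k2 a b c \<in> submod_gen (Jmin k1 k2)" for c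
  proof (rule R12sup_comb_in_span_of_partners)
    assume "b \<noteq> -1"
    show "R12sup_comb k1 k2 a (-b-2) c \<in> submod_gen (Jmin k1 k2)"
      by (rule R12sup_comb_in_span; rule below) (use less.prems assms \<open>b \<noteq> -1\<close> in arith)+
  next
    assume "a \<noteq> k1+1"
    show "R12sup_comb k1 k2 (2*k1+2-a) b c \<in> submod_gen (Jmin k1 k2)"
      by (rule R12sup_comb_in_span; rule below) (use less.prems assms \<open>a \<noteq> k1+1\<close> in arith)+
  next
    assume "a \<noteq> k1+1" and "b \<noteq> -1"
    show "R12sup_comb k1 k2 (2*k1+2-a) (-b-2) c \<in> submod_gen (Jmin k1 k2)"
      by (rule R12sup_comb_in_span; rule below)
        (use less.prems assms \<open>a \<noteq> k1+1\<close> \<open>b \<noteq> -1\<close> in arith)+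
  qed
  then show ?case
    unfolding spanned_def
    by (intro allI R12sup_in_span_of_comb[OF _ below below]) (use less.prems assms in arith)+
qed

lemma spanned_all:
  assumes "1 \<le> k1"
  shows "spanned k1 k2 a b"
proof -
  consider "k1 < a \<and> b < 0" | "k1 < k1 - a \<and> k2 - b < 0" | "\<not> (k1 < a \<and> b < 0)" "\<not> (a < 0 \<and> k2 < b)"
    by linarith
  then show ?thesis
  proof cases
    case 1
    then show ?thesis using spanned_gap[OF assms] by blast
  next
    case 2
    then show ?thesis using spanned_gap[OF assms] spanned_reflect by blast
  next
    case 3
    then show ?thesis by (rule spanned_off_gap)
  qed
qed

theorem proposition4p1:
  fixes k1 k2 :: int
  assumes "1 \<le> k1" and "k1 \<le> k2"
  shows "submod_gen {R12sup k1 k2 n1 n2 n3 | n1 n2 n3. True} =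
         submod_gen (J12 k1 k2 {real_of_int k1<..} {0..}
                     \<union> J12 k1 k2 {real_of_int k1 / 2<..real_of_int k1} {real_of_int k2 / 2<..}
                     \<union> J12 k1 k2 {0..real_of_int k1 / 2} {real_of_int k2 / 2..})"
proof -
  have "{R12sup k1 k2 n1 n2 n3 | n1 n2 n3. True} \<subseteq> submod_gen (Jmin k1 k2)"
    using spanned_all[OF assms(1)] unfolding spanned_def by blast
  moreover have "Jmin k1 k2 \<subseteq> {R12sup k1 k2 n1 n2 n3 | n1 n2 n3. True}"
    unfolding Jmin_def J12_def by blast
  ultimately have "submod_gen {R12sup k1 k2 n1 n2 n3 | n1 n2 n3. True} = submod_gen (Jmin k1 k2)"
    by (intro equalityI submod_gen_minimal submod_gen_mono)
  then show ?thesis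
    by (simp only: Jmin_def)
qed

end
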